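(* For every integer $n\ge 3$, $\mathrm{ex}(n,M_2,S_4)=n(n-3)/2$.
   Context: $M_2$ is the matching with two edges and $S_4$ is the star on $4$ vertices (a center with three leaves). For graphs $H,G$, $\mathcal{N}(H,G)$ is the number of subgraphs of $G$ isomorphic to $H$, and $\mathrm{ex}(n,H,F)$ is the maximum of $\mathcal{N}(H,G)$ over $F$-free graphs $G$ on $n$ vertices. *)

theory Defs
  imports Complex_Main
begin

type_synonym 'a sgraph = "'a set \<times> 'a set set"

definition wf_graph :: "'a sgraph \<Rightarrow> bool" where
  "wf_graph G \<longleftrightarrow> finite (fst G) \<and> (\<forall>e\<in>snd G. e \<subseteq> fst G \<and> card e = 2)"

definition subgraph :: "'a sgraph \<Rightarrow> 'a sgraph \<Rightarrow> bool" where
  "subgraph S G \<longleftrightarrow> wf_graph S \<and> fst S \<subseteq> fst G \<and> snd S \<subseteq> snd G"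

definition graph_iso :: "'a sgraph \<Rightarrow> 'b sgraph \<Rightarrow> bool" where
  "graph_iso G H \<longleftrightarrow> (\<exists>f. bij_betw f (fst G) (fst H) \<and> (\<lambda>e. f ` e) ` snd G = snd H)"

definition num_copies :: "'b sgraph \<Rightarrow> 'a sgraph \<Rightarrow> nat" where
  "num_copies H G = card {S. subgraph S G \<and> graph_iso S H}"

text \<open>ex(n,H,F): maximum of \<N>(H,G) over F-free graphs G on n vertices
  (vertex set {0..<n} without loss of generality).\<close>
definition gen_ex :: "nat \<Rightarrow> 'b sgraph \<Rightarrow> 'c sgraph \<Rightarrow> nat" where
  "gen_ex n H F = Max {num_copies H G | G :: nat sgraph.
      wf_graph G \<and> fst G = {..<n} \<and> num_copies F G = 0}"

definition M2 :: "nat sgraph" where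
  "M2 = ({0,1,2,3}, {{0,1},{2,3}})"

definition S4 :: "nat sgraph" where
  "S4 = ({0,1,2,3}, {{0,1},{0,2},{0,3}})"

end

(*
  An S4-free graph is a graph of maximum degree at most 2.  An edge uv meets exactly
  d(u) + d(v) - 1 edges (itself included), so summing over edges, the number D of ordered
  pairs of disjoint edges satisfies D + (sum of d(v)^2) = m^2 + m.  For degrees in {0,1,2}
  we have d^2 >= d and d^2 >= 3d - 2, which together with m <= n squeeze D <= n(n-3).
  Copies of M2 are the unordered disjoint pairs, i.e. D/2 of them, and the n-cycle
  (all degrees 2, m = n) attains the bound.
*)
theory Submission
  imports Defs
begin

definition degree :: "'a set set \<Rightarrow> 'a \<Rightarrow> nat" where
  "degree E v = card {e \<in> E. v \<in> e}"

definition disjoint_edge_pairs :: "'a set set \<Rightarrow> ('a set \<times> 'a set) set" where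
  "disjoint_edge_pairs E = {(a, b). a \<in> E \<and> b \<in> E \<and> a \<inter> b = {}}"

lemma card_eq_mult_card_image:
  assumes "finite A" and "\<And>x. x \<in> A \<Longrightarrow> card {y \<in> A. f y = f x} = k"
  shows "card A = k * card (f ` A)"
proof -
  have "card A = (\<Sum>z \<in> f ` A. card {y \<in> A. f y = z})"
    using sum.group[of A "f ` A" f "\<lambda>_. 1 :: nat"] assms(1) by simp
  also have "\<dots> = (\<Sum>z \<in> f ` A. k)"
    using assms(2) by (intro sum.cong) auto
  finally show ?thesis by simp
qed

lemma disjoint_pairs_count_bound:
  fixes D Q m n :: nat
  assumes "D + Q = m ^ 2 + m" "2 * m \<le> Q" "6 * m \<le> Q + 2 * n" "m \<le> n" "3 \<le> n"
  shows "D \<le> n * (n - 3)"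
proof (cases "m \<le> 1")
  case True
  then have "D = 0"
    using assms(1,2) by (auto simp: le_Suc_eq power2_eq_square)
  then show ?thesis
    by simp
next
  case False
  have "int D + int Q = int m * int m + int m"
    using assms(1) by (metis of_nat_add of_nat_mult power2_eq_square)
  moreover have "6 * int m \<le> int Q + 2 * int n"
    using assms(3) by linarith
  moreover have "0 \<le> (int n - int m) * (int n + int m - 5)"
    using False assms(4,5) by simp
  ultimately have "int D \<le> int n * (int n - 3)"
    by (simp add: algebra_simps)
  moreover have "int (n * (n - 3)) = int n * (int n - 3)"
    using assms(5) by simp
  ultimately show ?thesis
    by (metis of_nat_le_iff)
qed

lemma copy_iff_embedding:
  assumes "wf_graph (U, K)"
  shows "subgraph S G \<and> graph_iso S (U, K) \<longleftrightarrow>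
    (\<exists>g. inj_on g U \<and> g ` U \<subseteq> fst G \<and> (`) g ` K \<subseteq> snd G \<and> S = (g ` U, (`) g ` K))"
proof
  assume "subgraph S G \<and> graph_iso S (U, K)"
  then obtain W F f where S: "S = (W, F)" and sub: "subgraph (W, F) G"
    and f: "bij_betw f W U" "(`) f ` F = K"
    by (cases S) (auto simp: graph_iso_def)
  define g where "g = inv_into W f"
  have g: "bij_betw g U W"
    using f(1) by (simp add: g_def bij_betw_inv_into)
  have "(`) g ` K = F"
  proof -
    have "g ` f ` e = e" if "e \<in> F" for e
      using that sub f(1) unfolding g_def subgraph_def wf_graph_def bij_betw_def
      by (auto intro!: image_inv_into_cancel)
    then show ?thesis
      unfolding f(2)[symmetric] image_image by simp
  qed
  then show "\<exists>g. inj_on g U \<and> g ` U \<subseteq> fst G \<and> (`) g ` K \<subseteq> snd G \<and> S = (g ` U, (`) g ` K)"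
    using g sub S by (auto simp: bij_betw_def subgraph_def)
next
  assume "\<exists>g. inj_on g U \<and> g ` U \<subseteq> fst G \<and> (`) g ` K \<subseteq> snd G \<and> S = (g ` U, (`) g ` K)"
  then obtain g where g: "inj_on g U" "g ` U \<subseteq> fst G" "(`) g ` K \<subseteq> snd G"
    and S: "S = (g ` U, (`) g ` K)"
    by blast
  have KU: "k \<subseteq> U" "card k = 2" if "k \<in> K" for k
    using assms that by (auto simp: wf_graph_def)
  have "card (g ` k) = 2" if "k \<in> K" for k
    using KU[OF that] card_image inj_on_subset[OF g(1)] by metis
  then have "subgraph S G"
    using assms g KU S by (fastforce simp: subgraph_def wf_graph_def)
  moreover have "graph_iso S (U, K)"
  proof -
    define f where "f = inv_into U g"
    have "f ` g ` k = k" if "k \<in> K" for k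
      using KU[OF that] g(1) unfolding f_def by (auto intro!: image_inv_into_cancel)
    then have "(`) f ` (`) g ` K = K"
      unfolding image_image by simp
    moreover have "bij_betw f (g ` U) U"
      using g(1) unfolding f_def by (simp add: bij_betw_inv_into inj_on_imp_bij_betw)
    ultimately show ?thesis
      unfolding graph_iso_def S by auto
  qed
  ultimately show "subgraph S G \<and> graph_iso S (U, K)" ..
qed

locale finite_simple_graph =
  fixes V :: "'a set" and E :: "'a set set"
  assumes wf: "wf_graph (V, E)"
begin

lemma finite_vertices: "finite V"
  using wf by (simp add: wf_graph_def)

lemma edge_subset: "e \<in> E \<Longrightarrow> e \<subseteq> V"
  using wf by (simp add: wf_graph_def)

lemma card_edge: "e \<in> E \<Longrightarrow> card e = 2"
  using wf by (simp add: wf_graph_def)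

lemma finite_edges: "finite E"
  using finite_vertices edge_subset by (meson PowI finite_Pow_iff finite_subset subsetI)

lemma edge_doubleton:
  assumes "e \<in> E"
  obtains u w where "u \<noteq> w" "e = {u, w}"
  using card_edge[OF assms] by (meson card_2_iff)

lemma edge_other_end:
  assumes "e \<in> E" "v \<in> e"
  obtains x where "x \<noteq> v" "e = {v, x}"
proof -
  have "card (e - {v}) = 1"
    using card_edge[OF assms(1)] assms(2) by simp
  then obtain x where "e - {v} = {x}"
    by (rule card_1_singletonE)
  then have "x \<noteq> v" "e = {v, x}"
    using assms(2) by auto
  then show thesis
    by (rule that)
qed

lemma sum_over_edges: "(\<Sum>e\<in>E. \<Sum>x\<in>e. f x) = (\<Sum>v\<in>V. degree E v * f v)"
proof -
  have "(\<Sum>e\<in>E. \<Sum>x\<in>e. f x) = (\<Sum>e\<in>E. \<Sum>v\<in>{v \<in> V. v \<in> e}. f v)"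
    using edge_subset by (intro sum.cong) (auto intro: arg_cong[where f = "sum f"])
  also have "\<dots> = (\<Sum>v\<in>V. \<Sum>e\<in>{e \<in> E. v \<in> e}. f v)"
    using finite_edges finite_vertices by (rule sum.swap_restrict)
  finally show ?thesis by (simp add: degree_def)
qed

lemma sum_degree: "(\<Sum>v\<in>V. degree E v) = 2 * card E"
  using sum_over_edges[of "\<lambda>_. 1"] by (simp add: card_edge)

lemma edge_eq_if_contains_ends:
  assumes "a \<in> E" "b \<in> E" "a = {u, w}" "u \<in> b" "w \<in> b"
  shows "b = a"
proof -
  have "finite b"
    using card_edge[OF assms(2)] by (metis card.infinite zero_neq_numeral)
  then show ?thesis
    using card_subset_eq[of b a] card_edge assms by simp
qed

lemma card_disjoint_from_edge:
  assumes "a \<in> E"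
  shows "card {b \<in> E. a \<inter> b = {}} + (\<Sum>x\<in>a. degree E x) = card E + 1"
proof -
  obtain u w where uw: "u \<noteq> w" "a = {u, w}"
    using assms by (rule edge_doubleton)
  let ?Eu = "{b \<in> E. u \<in> b}" and ?Ew = "{b \<in> E. w \<in> b}"
  have "?Eu \<inter> ?Ew = {a}"
    using edge_eq_if_contains_ends[OF assms _ uw(2)] assms uw by blast
  moreover have "?Eu \<union> ?Ew = {b \<in> E. a \<inter> b \<noteq> {}}"
    using uw by auto
  ultimately have "degree E u + degree E w = card {b \<in> E. a \<inter> b \<noteq> {}} + 1"
    unfolding degree_def using card_Un_Int[of ?Eu ?Ew] finite_edges by simp
  moreover have "card {b \<in> E. a \<inter> b = {}} + card {b \<in> E. a \<inter> b \<noteq> {}} = card E"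
  proof -
    have "E = {b \<in> E. a \<inter> b = {}} \<union> {b \<in> E. a \<inter> b \<noteq> {}}"
      by blast
    then show ?thesis
      using finite_edges by (metis (no_types, lifting) card_Un_disjoint disjoint_iff finite_Un mem_Collect_eq)
  qed
  ultimately show ?thesis
    using uw by simp
qed

lemma card_disjoint_edge_pairs:
  "card (disjoint_edge_pairs E) + (\<Sum>v\<in>V. degree E v ^ 2) = card E ^ 2 + card E"
proof -
  have "disjoint_edge_pairs E = (SIGMA a:E. {b \<in> E. a \<inter> b = {}})"
    by (auto simp: disjoint_edge_pairs_def)
  then have "card (disjoint_edge_pairs E) = (\<Sum>a\<in>E. card {b \<in> E. a \<inter> b = {}})"
    using finite_edges by simp
  moreover have "(\<Sum>v\<in>V. degree E v ^ 2) = (\<Sum>a\<in>E. \<Sum>x\<in>a. degree E x)"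
    by (simp add: sum_over_edges power2_eq_square)
  ultimately have "card (disjoint_edge_pairs E) + (\<Sum>v\<in>V. degree E v ^ 2) = (\<Sum>a\<in>E. card E + 1)"
    by (simp add: sum.distrib[symmetric] card_disjoint_from_edge)
  then show ?thesis
    by (simp add: power2_eq_square)
qed

lemma num_copies_eq_0_iff:
  "num_copies H (V, E) = 0 \<longleftrightarrow> (\<nexists>S. subgraph S (V, E) \<and> graph_iso S H)"
proof -
  have "{S. subgraph S (V, E) \<and> graph_iso S H} \<subseteq> Pow V \<times> Pow E"
    by (auto simp: subgraph_def)
  then have "finite {S. subgraph S (V, E) \<and> graph_iso S H}"
    using finite_vertices finite_edges by (meson finite_Pow_iff finite_SigmaI finite_subset)
  then show ?thesis
    unfolding num_copies_def by simp
qed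

lemma M2_copies:
  "{S. subgraph S (V, E) \<and> graph_iso S M2} = (\<lambda>(a, b). (a \<union> b, {a, b})) ` disjoint_edge_pairs E"
proof -
  have wf_M2: "wf_graph ({0, 1, 2, 3 :: nat}, {{0, 1}, {2, 3}})"
    by (simp add: wf_graph_def)
  have "S \<in> (\<lambda>(a, b). (a \<union> b, {a, b})) ` disjoint_edge_pairs E"
    if "inj_on g {0, 1, 2, 3}" "g ` {0, 1, 2, 3} \<subseteq> V" "(`) g ` {{0, 1}, {2, 3}} \<subseteq> E"
      "S = (g ` {0, 1, 2, 3}, (`) g ` {{0, 1}, {2, 3}})" for S and g :: "nat \<Rightarrow> 'a"
    by (rule image_eqI[where x = "({g 0, g 1}, {g 2, g 3})"])
      (use that in \<open>auto simp: disjoint_edge_pairs_def\<close>)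
  moreover have "\<exists>g. inj_on g {0, 1, 2, 3 :: nat} \<and> g ` {0, 1, 2, 3} \<subseteq> V \<and> (`) g ` {{0, 1}, {2, 3}} \<subseteq> E
      \<and> (a \<union> b, {a, b}) = (g ` {0, 1, 2, 3}, (`) g ` {{0, 1}, {2, 3}})"
    if "(a, b) \<in> disjoint_edge_pairs E" for a b
  proof -
    have ab: "a \<in> E" "b \<in> E" "a \<inter> b = {}"
      using that by (auto simp: disjoint_edge_pairs_def)
    obtain u w where a: "u \<noteq> w" "a = {u, w}"
      using ab(1) by (rule edge_doubleton)
    obtain x y where b: "x \<noteq> y" "b = {x, y}"
      using ab(2) by (rule edge_doubleton)
    show ?thesis
      by (rule exI[where x = "(!) [u, w, x, y]"])
        (use ab a b edge_subset in \<open>auto simp: insert_commute\<close>)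
  qed
  ultimately show ?thesis
    unfolding M2_def copy_iff_embedding[OF wf_M2] by (auto simp: fst_def snd_def)
qed

lemma two_num_copies_M2: "2 * num_copies M2 (V, E) = card (disjoint_edge_pairs E)"
proof -
  let ?h = "\<lambda>(a, b). (a \<union> b, {a, b})"
  have "finite (disjoint_edge_pairs E)"
    by (rule finite_subset[of _ "E \<times> E"]) (auto simp: disjoint_edge_pairs_def finite_edges)
  moreover have "card {q \<in> disjoint_edge_pairs E. ?h q = ?h p} = 2"
    if "p \<in> disjoint_edge_pairs E" for p
  proof -
    obtain a b where p: "p = (a, b)"
      by (cases p)
    then have ab: "a \<in> E" "b \<in> E" "a \<inter> b = {}"
      using that by (auto simp: disjoint_edge_pairs_def)
    have "a \<noteq> b"
      using ab card_edge[of a] by auto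
    moreover have "{q \<in> disjoint_edge_pairs E. ?h q = ?h p} = {(a, b), (b, a)}"
      unfolding p using ab by (auto simp: disjoint_edge_pairs_def doubleton_eq_iff)
    ultimately show ?thesis
      by simp
  qed
  ultimately have "card (disjoint_edge_pairs E) = 2 * card (?h ` disjoint_edge_pairs E)"
    by (rule card_eq_mult_card_image)
  then show ?thesis
    unfolding num_copies_def M2_copies ..
qed

lemma three_le_degree_if_star:
  assumes "inj_on g {0, 1, 2, 3 :: nat}" and "(`) g ` {{0, 1}, {0, 2}, {0, 3}} \<subseteq> E"
  shows "3 \<le> degree E (g 0)"
proof -
  have "g 1 \<noteq> g 2" "g 1 \<noteq> g 3" "g 2 \<noteq> g 3"
    using assms(1) unfolding inj_on_def by auto
  then have "card {{g 0, g 1}, {g 0, g 2}, {g 0, g 3}} = 3"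
    by (simp add: doubleton_eq_iff)
  moreover have "card {{g 0, g 1}, {g 0, g 2}, {g 0, g 3}} \<le> degree E (g 0)"
    unfolding degree_def using assms(2) finite_edges by (intro card_mono) auto
  ultimately show ?thesis
    by simp
qed

lemma star_if_three_le_degree:
  assumes "3 \<le> degree E v"
  shows "\<exists>g. inj_on g {0, 1, 2, 3 :: nat} \<and> g ` {0, 1, 2, 3} \<subseteq> V
    \<and> (`) g ` {{0, 1}, {0, 2}, {0, 3}} \<subseteq> E"
proof -
  obtain T where T: "T \<subseteq> {e \<in> E. v \<in> e}" "card T = 3" "finite T"
    using assms unfolding degree_def by (rule obtain_subset_with_card_n)
  obtain e1 e2 e3 where e: "T = {e1, e2, e3}" "e1 \<noteq> e2" "e1 \<noteq> e3" "e2 \<noteq> e3"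
    using T(2) by (auto simp: card_3_iff)
  have "e1 \<in> E" "v \<in> e1" "e2 \<in> E" "v \<in> e2" "e3 \<in> E" "v \<in> e3"
    using T(1) e(1) by auto
  then obtain x1 x2 x3 where x: "x1 \<noteq> v" "x2 \<noteq> v" "x3 \<noteq> v"
    and ex: "e1 = {v, x1}" "e2 = {v, x2}" "e3 = {v, x3}"
    using edge_other_end by metis
  let ?g = "(!) [v, x1, x2, x3]"
  have "distinct [v, x1, x2, x3]"
    using x e(2-4) unfolding ex by auto
  then have "inj_on ?g {0, 1, 2, 3}"
    by (intro inj_on_nth) auto
  moreover have "{{v, x1}, {v, x2}, {v, x3}} \<subseteq> E"
    using T e(1) unfolding ex by auto
  moreover have "(`) ?g ` {{0, 1}, {0, 2}, {0, 3}} = {{v, x1}, {v, x2}, {v, x3}}"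
    by simp
  moreover have "?g ` {0, 1, 2, 3} = {v, x1, x2, x3}"
    by simp
  ultimately show ?thesis
    using edge_subset by (intro exI[where x = ?g]) auto
qed

lemma S4_copy_iff: "(\<exists>S. subgraph S (V, E) \<and> graph_iso S S4) \<longleftrightarrow> (\<exists>v. 3 \<le> degree E v)"
proof
  have wf_S4: "wf_graph ({0, 1, 2, 3 :: nat}, {{0, 1}, {0, 2}, {0, 3}})"
    by (simp add: wf_graph_def)
  show "\<exists>v. 3 \<le> degree E v" if copy: "\<exists>S. subgraph S (V, E) \<and> graph_iso S S4"
  proof -
    obtain g :: "nat \<Rightarrow> 'a" where "inj_on g {0, 1, 2, 3}" "(`) g ` {{0, 1}, {0, 2}, {0, 3}} \<subseteq> E"
      using copy unfolding S4_def copy_iff_embedding[OF wf_S4] by auto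
    then have "3 \<le> degree E (g 0)"
      by (rule three_le_degree_if_star)
    then show ?thesis ..
  qed
  show "\<exists>S. subgraph S (V, E) \<and> graph_iso S S4" if high_degree: "\<exists>v. 3 \<le> degree E v"
  proof -
    obtain v where "3 \<le> degree E v"
      using high_degree ..
    then have "\<exists>g. inj_on g {0, 1, 2, 3 :: nat} \<and> g ` {0, 1, 2, 3} \<subseteq> V
        \<and> (`) g ` {{0, 1}, {0, 2}, {0, 3}} \<subseteq> E"
      by (rule star_if_three_le_degree)
    then show ?thesis
      unfolding S4_def copy_iff_embedding[OF wf_S4] by auto
  qed
qed

lemma num_copies_S4_eq_0_iff: "num_copies S4 (V, E) = 0 \<longleftrightarrow> (\<forall>v. degree E v \<le> 2)"
proof -
  have "num_copies S4 (V, E) = 0 \<longleftrightarrow> \<not> (\<exists>S. subgraph S (V, E) \<and> graph_iso S S4)"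
    by (rule num_copies_eq_0_iff)
  also have "\<dots> \<longleftrightarrow> \<not> (\<exists>v. 3 \<le> degree E v)"
    by (simp only: S4_copy_iff)
  also have "\<dots> \<longleftrightarrow> (\<forall>v. degree E v \<le> 2)"
    using not_le[of 3 "degree E _"] by (metis less_Suc_eq_le numeral_2_eq_2 numeral_3_eq_3)
  finally show ?thesis .
qed

lemma two_num_copies_M2_le:
  assumes "num_copies S4 (V, E) = 0" and "3 \<le> card V"
  shows "2 * num_copies M2 (V, E) \<le> card V * (card V - 3)"
proof -
  let ?d = "degree E" and ?m = "card E" and ?n = "card V"
  let ?Q = "\<Sum>v\<in>V. ?d v ^ 2"
  have d: "?d v \<le> 2" for v
    using assms(1) num_copies_S4_eq_0_iff by blast
  have "card (disjoint_edge_pairs E) + ?Q = ?m ^ 2 + ?m"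
    by (rule card_disjoint_edge_pairs)
  moreover have "2 * ?m \<le> ?Q"
    using sum_mono[of V ?d "\<lambda>v. ?d v ^ 2"] by (simp add: sum_degree power2_eq_square)
  moreover have "6 * ?m \<le> ?Q + 2 * ?n"
  proof -
    have "3 * ?d v \<le> ?d v ^ 2 + 2" for v
      using d[of v] by (cases "?d v") (auto simp: power2_eq_square)
    then have "(\<Sum>v\<in>V. 3 * ?d v) \<le> (\<Sum>v\<in>V. ?d v ^ 2 + 2)"
      by (rule sum_mono)
    then show ?thesis
      unfolding sum.distrib sum_distrib_left[symmetric] by (simp add: sum_degree)
  qed
  moreover have "?m \<le> ?n"
    using sum_mono[of V ?d "\<lambda>_. 2"] d by (simp add: sum_degree)
  ultimately show ?thesis
    unfolding two_num_copies_M2 using assms(2) by (rule disjoint_pairs_count_bound)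
qed

end

definition cycle_edges :: "nat \<Rightarrow> nat set set" where
  "cycle_edges n = (\<lambda>i. {i, Suc i mod n}) ` {..<n}"

lemma wf_graph_cycle: "2 \<le> n \<Longrightarrow> wf_graph ({..<n}, cycle_edges n)"
  by (auto simp: wf_graph_def cycle_edges_def mod_Suc)

lemma card_cycle_edges: "3 \<le> n \<Longrightarrow> card (cycle_edges n) = n"
  unfolding cycle_edges_def
  by (subst card_image) (auto simp: inj_on_def doubleton_eq_iff mod_Suc split: if_splits)

lemma degree_cycle_edges_le: "degree (cycle_edges n) v \<le> 2"
proof -
  have "{e \<in> cycle_edges n. v \<in> e} \<subseteq> (\<lambda>i. {i, Suc i mod n}) ` {v, (v + n - 1) mod n}"
    by (auto simp: cycle_edges_def mod_Suc split: if_splits)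
  then have "degree (cycle_edges n) v \<le> card ((\<lambda>i. {i, Suc i mod n}) ` {v, (v + n - 1) mod n})"
    unfolding degree_def by (intro card_mono) auto
  also have "\<dots> \<le> card {v, (v + n - 1) mod n}"
    by (rule card_image_le) simp
  also have "\<dots> \<le> 2"
    by (simp add: card_insert_if)
  finally show ?thesis .
qed

lemma num_copies_S4_cycle:
  assumes "2 \<le> n"
  shows "num_copies S4 ({..<n}, cycle_edges n) = 0"
proof -
  interpret finite_simple_graph "{..<n}" "cycle_edges n"
    using assms by unfold_locales (rule wf_graph_cycle)
  show ?thesis
    using num_copies_S4_eq_0_iff degree_cycle_edges_le by blast
qed

lemma two_num_copies_M2_cycle:
  assumes "3 \<le> n"
  shows "2 * num_copies M2 ({..<n}, cycle_edges n) = n * (n - 3)"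
proof -
  interpret finite_simple_graph "{..<n}" "cycle_edges n"
    using assms by unfold_locales (simp add: wf_graph_cycle)
  have "(\<Sum>v<n. degree (cycle_edges n) v ^ 2) \<le> (\<Sum>v<n. 2 * degree (cycle_edges n) v)"
    using degree_cycle_edges_le by (intro sum_mono) (simp add: power2_eq_square)
  also have "\<dots> = 4 * n"
    using sum_degree card_cycle_edges[OF assms] by (simp add: sum_distrib_left[symmetric])
  finally have "n * (n - 3) \<le> card (disjoint_edge_pairs (cycle_edges n))"
    using card_disjoint_edge_pairs card_cycle_edges[OF assms]
    by (simp add: power2_eq_square diff_mult_distrib2)
  moreover have "num_copies S4 ({..<n}, cycle_edges n) = 0"
    using assms by (simp add: num_copies_S4_cycle)
  ultimately show ?thesis
    using two_num_copies_M2_le assms unfolding two_num_copies_M2 by fastforce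
qed

lemma num_copies_M2_le_cycle:
  assumes "wf_graph ({..<n}, E)" and "num_copies S4 ({..<n}, E) = 0" and "3 \<le> n"
  shows "num_copies M2 ({..<n}, E) \<le> num_copies M2 ({..<n}, cycle_edges n)"
proof -
  interpret finite_simple_graph "{..<n}" E
    using assms(1) by unfold_locales
  show ?thesis
    using two_num_copies_M2_le[OF assms(2)] two_num_copies_M2_cycle[OF assms(3)] assms(3)
    by simp
qed

theorem mainTheorem19:
  fixes n :: nat
  assumes "n \<ge> 3"
  shows "real (gen_ex n M2 S4) = real n * (real n - 3) / 2"
proof -
  define c where "c = num_copies M2 ({..<n}, cycle_edges n)"
  let ?A = "{num_copies M2 G | G :: nat sgraph. wf_graph G \<and> fst G = {..<n} \<and> num_copies S4 G = 0}"
  have cA: "c \<in> ?A"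
    using assms wf_graph_cycle num_copies_S4_cycle unfolding c_def
    by (intro CollectI exI[where x = "({..<n}, cycle_edges n)"]) simp
  have ub: "x \<le> c" if "x \<in> ?A" for x
    using that num_copies_M2_le_cycle assms unfolding c_def by (auto simp: prod_eq_iff)
  then have "finite ?A"
    by (intro finite_subset[OF _ finite_atMost[of c]]) blast
  then have "gen_ex n M2 S4 = c"
    unfolding gen_ex_def using ub cA by (rule Max_eqI)
  moreover have "real (2 * c) = real n * (real n - 3)"
    using two_num_copies_M2_cycle[OF assms] assms unfolding c_def by simp
  ultimately show ?thesis
    by simp
qed

end
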